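(* Let $k\ge 2$ be even, let $\alpha_1,\dots,\alpha_k$ be positive integers with $n=\alpha_1+\cdots+\alpha_k$, let $G=C(\alpha_1,\dots,\alpha_k)$, and let $Q_L$ be the quotient matrix of its Laplacian with respect to the partition $\pi=\{\pi_1,\dots,\pi_k\}$. Then the eigenvalues of $Q_L$, listed as $\lambda_1\le\lambda_2\le\cdots\le\lambda_k$, are determined by $\lambda_1=0$, $\lambda_k=n$ and $$\lambda_i=\lambda_{i-1}+\alpha_{k-2(i-2)}\quad (i=2,3,\dots,\tfrac{k}{2}),\qquad \lambda_i=\lambda_{i+1}-\alpha_{2i-(k-1)}\quad (i=k-1,k-2,\dots,\tfrac{k}{2}+1).$$ (Explicitly, $\lambda_i=\alpha_k+\alpha_{k-2}+\cdots+\alpha_{k-2i+4}$ for $2\le i\le k/2$, and $\lambda_{k/2+i}=\sum_{l=1}^{k/2}\alpha_{2l}+\sum_{m=1}^{i}\alpha_{2m-1}$ for $1\le i\le k/2$.) Each of these is also a Laplacian eigenvalue of $G$.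
   Context: For positive integers $\alpha_1,\dots,\alpha_k$, the graph $C(\alpha_1,\dots,\alpha_k)$ is defined recursively by $C(\alpha_1)=\overline{K_{\alpha_1}}$ (the edgeless graph on $\alpha_1$ vertices) and $C(\alpha_1,\dots,\alpha_i)=\overline{C(\alpha_1,\dots,\alpha_{i-1})\cup K_{\alpha_i}}$ for $i=2,\dots,k$, where $\cup$ is disjoint union and the bar denotes graph complement. Let $\pi_i$ be the set of $\alpha_i$ vertices introduced at step $i$ (for $i=1$, the vertices of $C(\alpha_1)$). When $k$ is even (standing assumption), equivalently: $\pi_i$ induces a clique if $i$ is odd and an independent set if $i$ is even, and for $i<j$ a vertex of $\pi_i$ and a vertex of $\pi_j$ are adjacent iff $j$ is even. Such graphs (with $k$ even) are called $\mathcal{C}$-graphs. $L=D-A$ is the Laplacian matrix. The quotient matrix $Q_L$ is the $k\times k$ matrix with $(Q_L)_{ij}=\sum_{v\in\pi_j}L_{uv}$ for any $u\in\pi_i$ (this is independent of the choice of $u$). *)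

theory Defs
  imports "Jordan_Normal_Form.Matrix" "Jordan_Normal_Form.Char_Poly"
begin

(* Blocks pi_1..pi_k are 1-indexed; vertices are 0..n-1, with pi_i = [bstart i, bstart i + alpha i). *)
definition bstart :: "(nat \<Rightarrow> nat) \<Rightarrow> nat \<Rightarrow> nat" where
  "bstart \<alpha> i = (\<Sum>j\<in>{1..<i}. \<alpha> j)"

definition block :: "(nat \<Rightarrow> nat) \<Rightarrow> nat \<Rightarrow> nat set" where
  "block \<alpha> i = {bstart \<alpha> i ..< bstart \<alpha> i + \<alpha> i}"

definition nverts :: "(nat \<Rightarrow> nat) \<Rightarrow> nat \<Rightarrow> nat" where
  "nverts \<alpha> k = (\<Sum>i=1..k. \<alpha> i)"

definition part :: "(nat \<Rightarrow> nat) \<Rightarrow> nat \<Rightarrow> nat \<Rightarrow> nat" where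
  "part \<alpha> k v = (THE i. i \<in> {1..k} \<and> v \<in> block \<alpha> i)"

definition cadj :: "(nat \<Rightarrow> nat) \<Rightarrow> nat \<Rightarrow> nat \<Rightarrow> nat \<Rightarrow> bool" where
  "cadj \<alpha> k u v = (u \<noteq> v \<and>
     (if part \<alpha> k u = part \<alpha> k v then odd (part \<alpha> k u)
      else even (max (part \<alpha> k u) (part \<alpha> k v))))"

definition claplacian :: "(nat \<Rightarrow> nat) \<Rightarrow> nat \<Rightarrow> real mat" where
  "claplacian \<alpha> k = mat (nverts \<alpha> k) (nverts \<alpha> k) (\<lambda>(u,v).
     if u = v then real (card {w \<in> {0..<nverts \<alpha> k}. cadj \<alpha> k u w})
     else if cadj \<alpha> k u v then -1 else 0)"

(* quotient matrix Q_L; row/column index i (0-based) corresponds to block pi_(i+1);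
   the representative u of pi_(i+1) is its first vertex *)
definition cquot :: "(nat \<Rightarrow> nat) \<Rightarrow> nat \<Rightarrow> real mat" where
  "cquot \<alpha> k = mat k k (\<lambda>(i,j).
     \<Sum>v\<in>block \<alpha> (j+1). claplacian \<alpha> k $$ (bstart \<alpha> (i+1), v))"

definition clam :: "(nat \<Rightarrow> nat) \<Rightarrow> nat \<Rightarrow> nat \<Rightarrow> real" where
  "clam \<alpha> k i = (if i \<le> 1 then 0
     else if i \<le> k div 2 then (\<Sum>l=2..i. real (\<alpha> (k - 2*(l-2))))
     else (\<Sum>l=1..k div 2. real (\<alpha> (2*l))) + (\<Sum>m=1..i - k div 2. real (\<alpha> (2*m-1))))"

end

theory Submission
  imports Defs
begin

text \<open>
  The partition into the blocks \<open>\<pi>\<^sub>i\<close> is equitable: a vertex of \<open>\<pi>\<^sub>i\<close> has exactly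
  \<open>block_weight \<alpha> i j\<close> neighbours in \<open>\<pi>\<^sub>j\<close> (\<open>j \<noteq> i\<close>). Hence \<open>Q\<^sub>L\<close> is the Laplacian of the weighted
  graph on the blocks, and an eigenvector of \<open>Q\<^sub>L\<close>, spread constantly over the blocks, is an
  eigenvector of \<open>L\<close>. For \<open>2 \<le> p \<le> k\<close> the vector that is \<open>\<alpha>\<^sub>p\<close> on the blocks before \<open>p\<close>,
  \<open>-(\<alpha>\<^sub>1 + \<dots> + \<alpha>\<^sub>p\<^sub>-\<^sub>1)\<close> on block \<open>p\<close> and \<open>0\<close> after it is an eigenvector of \<open>Q\<^sub>L\<close>; with the
  constant vector this yields \<open>k\<close> eigenvalues, which are the \<open>\<lambda>\<^sub>i\<close> up to order. They increase
  strictly, so they are \<open>k\<close> distinct roots of the monic characteristic polynomial of degree \<open>k\<close>.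
\<close>

lemma char_poly_eq_prod_distinct_eigenvalues:
  fixes A :: "'a :: field mat"
  assumes A: "A \<in> carrier_mat n n" and I: "finite I" "card I = n"
    and inj: "inj_on f I" and eig: "\<And>i. i \<in> I \<Longrightarrow> eigenvalue A (f i)"
  shows "char_poly A = (\<Prod>i\<in>I. [:- f i, 1:])"
proof (rule poly_eqI_degree_lead_coeff[where n = n and A = "f ` I"])
  have deg: "degree (\<Prod>i\<in>I. [:- f i, 1:]) = n"
    using I by (subst degree_prod_eq_sum_degree) auto
  moreover have "lead_coeff (\<Prod>i\<in>I. [:- f i, 1:]) = 1"
    by (simp add: lead_coeff_prod)
  ultimately show "coeff (char_poly A) n = coeff (\<Prod>i\<in>I. [:- f i, 1:]) n"
    and "degree (\<Prod>i\<in>I. [:- f i, 1:]) \<le> n"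
    using degree_monic_char_poly[OF A] by simp_all
  show "degree (char_poly A) \<le> n"
    using degree_monic_char_poly[OF A] by simp
  show "n \<le> card (f ` I)"
    using card_image[OF inj] I by simp
  fix z assume "z \<in> f ` I"
  then obtain i where "i \<in> I" "z = f i" by auto
  then show "poly (char_poly A) z = poly (\<Prod>i\<in>I. [:- f i, 1:]) z"
    using eig eigenvalue_root_char_poly[OF A] I by (auto simp: poly_prod)
qed

lemma sum_laplacian_form:
  fixes w z :: "'i \<Rightarrow> 'a :: comm_ring"
  assumes "finite I" "i \<in> I"
  shows "(\<Sum>j\<in>I. ((if i = j then \<Sum>l\<in>I. w l else 0) - w j) * z j) = (\<Sum>l\<in>I. w l * (z i - z l))"
proof -
  have "(\<Sum>j\<in>I. ((if i = j then \<Sum>l\<in>I. w l else 0) - w j) * z j)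
      = (\<Sum>j\<in>I. if i = j then (\<Sum>l\<in>I. w l) * z j else 0) - (\<Sum>j\<in>I. w j * z j)"
    by (simp add: left_diff_distrib sum_subtractf if_distrib[of "\<lambda>x. x * _"] cong: if_cong)
  also have "\<dots> = (\<Sum>l\<in>I. w l * (z i - z l))"
    using assms by (simp add: sum_distrib_right right_diff_distrib sum_subtractf)
  finally show ?thesis .
qed

lemma sum_split_at:
  fixes p k :: nat
  assumes "p \<in> {1..k}"
  shows "(\<Sum>l\<in>{1..k}. f l) = (\<Sum>l\<in>{1..<p}. f l) + f p + (\<Sum>l\<in>{p<..k}. f l)"
proof -
  have split: "{1..k} = {1..<p} \<union> insert p {p<..k}"
    using assms by auto
  have "(\<Sum>l\<in>{1..<p} \<union> insert p {p<..k}. f l) = (\<Sum>l\<in>{1..<p}. f l) + (\<Sum>l\<in>insert p {p<..k}. f l)"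
    by (rule sum.union_disjoint) auto
  then show ?thesis
    unfolding split by (simp add: add.assoc)
qed

lemma sum_evens_plus_odds:
  fixes f :: "nat \<Rightarrow> 'a :: comm_monoid_add"
  shows "(\<Sum>l=1..h. f (2*l)) + (\<Sum>l=1..h. f (2*l - 1)) = (\<Sum>i=1..2*h. f i)"
proof (induction h)
  case 0
  then show ?case by simp
next
  case (Suc h)
  have "{1..2 * Suc h} = insert (Suc (Suc (2*h))) (insert (Suc (2*h)) {1..2*h})"
    by auto
  then show ?case
    using Suc.IH by (simp add: ac_simps)
qed

lemma bstart_Suc: "1 \<le> i \<Longrightarrow> bstart \<alpha> (Suc i) = bstart \<alpha> i + \<alpha> i"
  unfolding bstart_def by (simp add: atLeastLessThanSuc)

lemma bstart_mono: "i \<le> j \<Longrightarrow> bstart \<alpha> i \<le> bstart \<alpha> j"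
  unfolding bstart_def by (rule sum_mono2) auto

lemma real_bstart: "real (bstart \<alpha> p) = (\<Sum>l\<in>{1..<p}. real (\<alpha> l))"
  unfolding bstart_def by simp

lemma nverts_eq_bstart: "nverts \<alpha> k = bstart \<alpha> (Suc k)"
  unfolding nverts_def bstart_def by (rule sum.cong) auto

lemma card_block [simp]: "card (block \<alpha> i) = \<alpha> i"
  unfolding block_def by simp

lemma finite_block [simp]: "finite (block \<alpha> i)"
  unfolding block_def by simp

lemma bstart_in_block: "0 < \<alpha> i \<Longrightarrow> bstart \<alpha> i \<in> block \<alpha> i"
  unfolding block_def by simp

lemma block_disjoint:
  assumes "1 \<le> i" "i < j"
  shows "block \<alpha> i \<inter> block \<alpha> j = {}"
proof -
  have "bstart \<alpha> i + \<alpha> i \<le> bstart \<alpha> j"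
    using assms bstart_Suc[of i \<alpha>] bstart_mono[of "Suc i" j \<alpha>] by simp
  then show ?thesis
    unfolding block_def by auto
qed

lemma block_unique: "1 \<le> i \<Longrightarrow> 1 \<le> j \<Longrightarrow> v \<in> block \<alpha> i \<Longrightarrow> v \<in> block \<alpha> j \<Longrightarrow> i = j"
  using block_disjoint by (metis disjoint_iff linorder_neqE_nat)

lemma block_subset_vertices: "j \<in> {1..k} \<Longrightarrow> block \<alpha> j \<subseteq> {0..<nverts \<alpha> k}"
  unfolding nverts_eq_bstart block_def
  using bstart_Suc[of j \<alpha>] bstart_mono[of "Suc j" "Suc k" \<alpha>] by auto

lemma vertices_eq_UN_blocks: "{0..<nverts \<alpha> k} = (\<Union>j\<in>{1..k}. block \<alpha> j)"
proof (induction k)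
  case 0
  then show ?case by (simp add: nverts_def)
next
  case (Suc k)
  have "{0..<nverts \<alpha> (Suc k)} = {0..<nverts \<alpha> k} \<union> block \<alpha> (Suc k)"
    unfolding nverts_eq_bstart block_def bstart_Suc[of "Suc k", simplified] by auto
  then show ?case
    using Suc.IH by (auto simp: atLeastAtMostSuc_conv)
qed

lemma part_eq: "i \<in> {1..k} \<Longrightarrow> v \<in> block \<alpha> i \<Longrightarrow> part \<alpha> k v = i"
  unfolding part_def by (rule the_equality) (use block_unique[of i _ v \<alpha>] in auto)

lemma sum_vertices_by_blocks:
  "(\<Sum>v\<in>{0..<nverts \<alpha> k}. f v) = (\<Sum>j\<in>{1..k}. \<Sum>v\<in>block \<alpha> j. f v)"
  unfolding vertices_eq_UN_blocks
  by (rule sum.UNION_disjoint) (use block_unique[of _ _ _ \<alpha>] in auto)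

lemma cadj_blocks:
  "i \<in> {1..k} \<Longrightarrow> j \<in> {1..k} \<Longrightarrow> u \<in> block \<alpha> i \<Longrightarrow> v \<in> block \<alpha> j \<Longrightarrow>
   cadj \<alpha> k u v \<longleftrightarrow> u \<noteq> v \<and> (if i = j then odd i else even (max i j))"
  unfolding cadj_def using part_eq[of i k u \<alpha>] part_eq[of j k v \<alpha>] by simp

lemma claplacian_entry:
  assumes "u < nverts \<alpha> k" "v < nverts \<alpha> k"
  shows "claplacian \<alpha> k $$ (u, v) =
    (if u = v then real (card {w \<in> {0..<nverts \<alpha> k}. cadj \<alpha> k u w}) else 0)
    - (if cadj \<alpha> k u v then 1 else 0)"
  using assms by (auto simp: claplacian_def cadj_def)

lemma claplacian_row_sum:
  assumes "u < nverts \<alpha> k"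
  shows "(\<Sum>v\<in>{0..<nverts \<alpha> k}. claplacian \<alpha> k $$ (u, v)) = 0"
  using assms by (simp add: claplacian_entry sum_subtractf sum.If_cases Int_def)

definition block_weight :: "(nat \<Rightarrow> nat) \<Rightarrow> nat \<Rightarrow> nat \<Rightarrow> real" where
  "block_weight \<alpha> i j = (if i \<noteq> j \<and> even (max i j) then real (\<alpha> j) else 0)"

lemma sum_block_claplacian_other:
  assumes i: "i \<in> {1..k}" and j: "j \<in> {1..k}" and "i \<noteq> j" and u: "u \<in> block \<alpha> i"
  shows "(\<Sum>v\<in>block \<alpha> j. claplacian \<alpha> k $$ (u, v)) = - block_weight \<alpha> i j"
proof -
  have "claplacian \<alpha> k $$ (u, v) = (if even (max i j) then -1 else 0)" if v: "v \<in> block \<alpha> j" for v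
  proof -
    have "u \<noteq> v"
      using block_unique[of i j u \<alpha>] i j u v \<open>i \<noteq> j\<close> by auto
    moreover have "u < nverts \<alpha> k" "v < nverts \<alpha> k"
      using block_subset_vertices[OF i, of \<alpha>] block_subset_vertices[OF j, of \<alpha>] u v by auto
    ultimately show ?thesis
      using cadj_blocks[OF i j u v] \<open>i \<noteq> j\<close> by (simp add: claplacian_entry)
  qed
  then show ?thesis
    using \<open>i \<noteq> j\<close> by (simp add: block_weight_def)
qed

lemma sum_block_claplacian:
  assumes i: "i \<in> {1..k}" and j: "j \<in> {1..k}" and u: "u \<in> block \<alpha> i"
  shows "(\<Sum>v\<in>block \<alpha> j. claplacian \<alpha> k $$ (u, v))
    = (if i = j then \<Sum>l\<in>{1..k}. block_weight \<alpha> i l else 0) - block_weight \<alpha> i j"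
proof (cases "i = j")
  case True
  have "0 = (\<Sum>l\<in>{1..k}. \<Sum>v\<in>block \<alpha> l. claplacian \<alpha> k $$ (u, v))"
    using claplacian_row_sum[of u \<alpha> k] block_subset_vertices[OF i, of \<alpha>] u
    by (auto simp: sum_vertices_by_blocks)
  also have "\<dots> = (\<Sum>v\<in>block \<alpha> i. claplacian \<alpha> k $$ (u, v))
      - (\<Sum>l\<in>{1..k} - {i}. block_weight \<alpha> i l)"
    using i u by (simp add: sum.remove sum_block_claplacian_other sum_negf)
  also have "(\<Sum>l\<in>{1..k} - {i}. block_weight \<alpha> i l) = (\<Sum>l\<in>{1..k}. block_weight \<alpha> i l)"
    using i by (simp add: sum.remove block_weight_def)
  finally show ?thesis
    using True by (simp add: block_weight_def)
qed (use assms sum_block_claplacian_other in simp)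

definition block_eigenvector :: "(nat \<Rightarrow> nat) \<Rightarrow> nat \<Rightarrow> real \<Rightarrow> (nat \<Rightarrow> real) \<Rightarrow> bool" where
  "block_eigenvector \<alpha> k \<mu> z \<longleftrightarrow> (\<exists>i\<in>{1..k}. z i \<noteq> 0) \<and>
     (\<forall>i\<in>{1..k}. (\<Sum>l\<in>{1..k}. block_weight \<alpha> i l * (z i - z l)) = \<mu> * z i)"

lemma cquot_entry:
  assumes pos: "\<And>i. i \<in> {1..k} \<Longrightarrow> 0 < \<alpha> i" and "i < k" "j < k"
  shows "cquot \<alpha> k $$ (i, j)
    = (if i = j then \<Sum>l\<in>{1..k}. block_weight \<alpha> (Suc i) l else 0) - block_weight \<alpha> (Suc i) (Suc j)"
  using assms sum_block_claplacian[of "Suc i" k "Suc j" "bstart \<alpha> (Suc i)" \<alpha>]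
    bstart_in_block[of \<alpha> "Suc i"] by (simp add: cquot_def)

lemma eigenvalue_cquot_if_block_eigenvector:
  assumes pos: "\<And>i. i \<in> {1..k} \<Longrightarrow> 0 < \<alpha> i" and z: "block_eigenvector \<alpha> k \<mu> z"
  shows "eigenvalue (cquot \<alpha> k) \<mu>"
proof -
  define y where "y = vec k (\<lambda>j. z (Suc j))"
  have "cquot \<alpha> k *\<^sub>v y = \<mu> \<cdot>\<^sub>v y"
  proof (rule eq_vecI)
    fix i assume "i < dim_vec (\<mu> \<cdot>\<^sub>v y)"
    then have i: "i < k" by (simp add: y_def)
    define W where "W = (\<Sum>l\<in>{1..k}. block_weight \<alpha> (Suc i) l)"
    define F where "F l = ((if Suc i = l then W else 0) - block_weight \<alpha> (Suc i) l) * z l" for l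
    have "(cquot \<alpha> k *\<^sub>v y) $ i = (\<Sum>j<k. cquot \<alpha> k $$ (i, j) * z (Suc j))"
      using i by (simp add: cquot_def y_def scalar_prod_def lessThan_atLeast0)
    also have "\<dots> = (\<Sum>j<k. F (Suc j))"
      using i cquot_entry[OF pos] by (auto simp: F_def W_def intro!: sum.cong)
    also have "\<dots> = sum F {1..k}"
      by (simp add: sum.atLeast1_atMost_eq)
    also have "\<dots> = (\<Sum>l\<in>{1..k}. block_weight \<alpha> (Suc i) l * (z (Suc i) - z l))"
      unfolding F_def W_def by (rule sum_laplacian_form) (use i in auto)
    also have "\<dots> = \<mu> * z (Suc i)"
      using i z by (simp add: block_eigenvector_def)
    finally show "(cquot \<alpha> k *\<^sub>v y) $ i = (\<mu> \<cdot>\<^sub>v y) $ i"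
      using i by (simp add: y_def)
  qed (simp add: cquot_def y_def)
  moreover have "y \<noteq> 0\<^sub>v k"
  proof
    assume y0: "y = 0\<^sub>v k"
    obtain j where j: "j \<in> {1..k}" "z j \<noteq> 0"
      using z by (auto simp: block_eigenvector_def)
    then have "y $ (j - 1) = z j"
      by (cases j) (auto simp: y_def)
    then show False
      using j y0 by auto
  qed
  ultimately show ?thesis
    unfolding eigenvalue_def eigenvector_def
    by (intro exI[of _ y]) (simp add: cquot_def y_def)
qed

lemma eigenvalue_claplacian_if_block_eigenvector:
  assumes pos: "\<And>i. i \<in> {1..k} \<Longrightarrow> 0 < \<alpha> i" and z: "block_eigenvector \<alpha> k \<mu> z"
  shows "eigenvalue (claplacian \<alpha> k) \<mu>"
proof -
  define n where "n = nverts \<alpha> k"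
  define x where "x = vec n (\<lambda>v. z (part \<alpha> k v))"
  have "claplacian \<alpha> k *\<^sub>v x = \<mu> \<cdot>\<^sub>v x"
  proof (rule eq_vecI)
    fix u assume "u < dim_vec (\<mu> \<cdot>\<^sub>v x)"
    then have "u < n" by (simp add: x_def)
    then have "u \<in> (\<Union>j\<in>{1..k}. block \<alpha> j)"
      unfolding n_def vertices_eq_UN_blocks[symmetric] by simp
    then obtain i where i: "i \<in> {1..k}" and u: "u \<in> block \<alpha> i"
      by blast
    have "(claplacian \<alpha> k *\<^sub>v x) $ u = (\<Sum>v\<in>{0..<n}. claplacian \<alpha> k $$ (u, v) * z (part \<alpha> k v))"
      using \<open>u < n\<close> by (simp add: claplacian_def n_def x_def scalar_prod_def)
    also have "\<dots> = (\<Sum>j\<in>{1..k}. (\<Sum>v\<in>block \<alpha> j. claplacian \<alpha> k $$ (u, v)) * z j)"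
      unfolding n_def sum_vertices_by_blocks sum_distrib_right by (auto intro!: sum.cong simp: part_eq)
    also have "\<dots> = (\<Sum>j\<in>{1..k}. ((if i = j then \<Sum>l\<in>{1..k}. block_weight \<alpha> i l else 0)
        - block_weight \<alpha> i j) * z j)"
      using i u by (simp add: sum_block_claplacian)
    also have "\<dots> = (\<Sum>l\<in>{1..k}. block_weight \<alpha> i l * (z i - z l))"
      by (rule sum_laplacian_form) (use i in auto)
    also have "\<dots> = \<mu> * z i"
      using i z by (simp add: block_eigenvector_def)
    finally show "(claplacian \<alpha> k *\<^sub>v x) $ u = (\<mu> \<cdot>\<^sub>v x) $ u"
      using \<open>u < n\<close> i u by (simp add: x_def part_eq)
  qed (simp add: claplacian_def n_def x_def)
  moreover have "x \<noteq> 0\<^sub>v n"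
  proof
    assume x0: "x = 0\<^sub>v n"
    obtain j where j: "j \<in> {1..k}" "z j \<noteq> 0"
      using z by (auto simp: block_eigenvector_def)
    then have "bstart \<alpha> j \<in> block \<alpha> j" "bstart \<alpha> j < n"
      using bstart_in_block[of \<alpha> j] pos block_subset_vertices[of j k \<alpha>] by (auto simp: n_def)
    then show False
      using j x0 part_eq[OF j(1)] by (metis index_vec index_zero_vec(1) x_def)
  qed
  ultimately show ?thesis
    unfolding eigenvalue_def eigenvector_def
    by (intro exI[of _ x]) (simp add: claplacian_def n_def x_def)
qed

definition even_tail :: "(nat \<Rightarrow> nat) \<Rightarrow> nat \<Rightarrow> nat \<Rightarrow> real" where
  "even_tail \<alpha> k p = (\<Sum>l\<in>{p<..k}. if even l then real (\<alpha> l) else 0)"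

definition pivot_vector :: "(nat \<Rightarrow> nat) \<Rightarrow> nat \<Rightarrow> nat \<Rightarrow> real" where
  "pivot_vector \<alpha> p l = (if l < p then real (\<alpha> p) else if l = p then - real (bstart \<alpha> p) else 0)"

definition pivot_eigenvalue :: "(nat \<Rightarrow> nat) \<Rightarrow> nat \<Rightarrow> nat \<Rightarrow> real" where
  "pivot_eigenvalue \<alpha> k p = (if even p then real (bstart \<alpha> (Suc p)) else 0) + even_tail \<alpha> k p"

lemma pivot_vector_eigen:
  assumes p: "p \<in> {1..k}" and j: "j \<in> {1..k}"
  shows "(\<Sum>l\<in>{1..k}. block_weight \<alpha> j l * (pivot_vector \<alpha> p j - pivot_vector \<alpha> p l))
    = pivot_eigenvalue \<alpha> k p * pivot_vector \<alpha> p j"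
    (is "(\<Sum>l\<in>{1..k}. ?F l) = _")
proof -
  have split: "(\<Sum>l\<in>{1..k}. ?F l) = (\<Sum>l\<in>{1..<p}. ?F l) + ?F p + (\<Sum>l\<in>{p<..k}. ?F l)"
    by (rule sum_split_at[OF p])
  have T: "real (bstart \<alpha> (Suc p)) = real (bstart \<alpha> p) + real (\<alpha> p)"
    using p by (simp add: bstart_Suc)
  consider "j < p" | "j = p" | "p < j" by linarith
  then show ?thesis
  proof cases
    case 1
    have "(\<Sum>l\<in>{1..<p}. ?F l) = 0"
      using 1 by (intro sum.neutral) (auto simp: pivot_vector_def)
    moreover have "(\<Sum>l\<in>{p<..k}. ?F l) = even_tail \<alpha> k p * real (\<alpha> p)"
      using 1 unfolding even_tail_def sum_distrib_right
      by (intro sum.cong) (auto simp: pivot_vector_def block_weight_def max_def)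
    ultimately show ?thesis
      using 1 split T by (auto simp: pivot_vector_def pivot_eigenvalue_def block_weight_def algebra_simps)
  next
    case 2
    have "(\<Sum>l\<in>{1..<p}. ?F l)
        = (\<Sum>l\<in>{1..<p}. if even p then - real (\<alpha> l) * real (bstart \<alpha> (Suc p)) else 0)"
      using 2 T by (intro sum.cong) (auto simp: pivot_vector_def block_weight_def max_def algebra_simps)
    also have "\<dots> = (if even p then - real (bstart \<alpha> p) * real (bstart \<alpha> (Suc p)) else 0)"
      unfolding real_bstart[of \<alpha> p] by (simp add: sum_negf sum_distrib_right)
    finally have "(\<Sum>l\<in>{1..<p}. ?F l) = \<dots>" .
    moreover have "(\<Sum>l\<in>{p<..k}. ?F l) = - real (bstart \<alpha> p) * even_tail \<alpha> k p"
      using 2 unfolding even_tail_def sum_distrib_left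
      by (intro sum.cong) (auto simp: pivot_vector_def block_weight_def max_def)
    ultimately show ?thesis
      using 2 split by (auto simp: pivot_vector_def pivot_eigenvalue_def block_weight_def algebra_simps)
  next
    case 3
    have "(\<Sum>l\<in>{1..<p}. ?F l) = (if even j then - real (bstart \<alpha> p) * real (\<alpha> p) else 0)"
      using 3 unfolding real_bstart[of \<alpha> p]
      by (auto simp: pivot_vector_def block_weight_def max_def sum_negf sum_distrib_right)
    moreover have "(\<Sum>l\<in>{p<..k}. ?F l) = 0"
      using 3 by (intro sum.neutral) (auto simp: pivot_vector_def block_weight_def)
    ultimately show ?thesis
      using 3 split by (auto simp: pivot_vector_def block_weight_def max_def)
  qed
qed

lemma block_eigenvector_pivot:
  assumes "p \<in> {2..k}" "0 < \<alpha> p"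
  shows "block_eigenvector \<alpha> k (pivot_eigenvalue \<alpha> k p) (pivot_vector \<alpha> p)"
  unfolding block_eigenvector_def
proof
  show "\<exists>i\<in>{1..k}. pivot_vector \<alpha> p i \<noteq> 0"
    using assms by (intro bexI[of _ 1]) (auto simp: pivot_vector_def)
  show "\<forall>i\<in>{1..k}. (\<Sum>l\<in>{1..k}. block_weight \<alpha> i l * (pivot_vector \<alpha> p i - pivot_vector \<alpha> p l))
      = pivot_eigenvalue \<alpha> k p * pivot_vector \<alpha> p i"
    using assms pivot_vector_eigen[of p k] by auto
qed

lemma block_eigenvector_const: "1 \<le> k \<Longrightarrow> block_eigenvector \<alpha> k 0 (\<lambda>_. 1)"
  unfolding block_eigenvector_def by auto

lemma even_tail_Suc:
  "p < k \<Longrightarrow> even_tail \<alpha> k p = (if even (Suc p) then real (\<alpha> (Suc p)) else 0) + even_tail \<alpha> k (Suc p)"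
proof -
  assume "p < k"
  then have "{p<..k} = insert (Suc p) {Suc p<..k}"
    by auto
  then show ?thesis
    unfolding even_tail_def by simp
qed

lemma even_tail_nonneg: "0 \<le> even_tail \<alpha> k p"
  unfolding even_tail_def by (rule sum_nonneg) auto

lemma sum_evens_eq_even_tail: "(\<Sum>l=1..h. real (\<alpha> (2*l))) = even_tail \<alpha> (2*h) 0"
proof (induction h)
  case 0
  then show ?case by (simp add: even_tail_def)
next
  case (Suc h)
  have "{0<..2 * Suc h} = insert (Suc (Suc (2*h))) (insert (Suc (2*h)) {0<..2*h})"
    by auto
  then show ?case
    using Suc.IH by (simp add: even_tail_def)
qed

lemma clam_one: "clam \<alpha> k 1 = 0"
  by (simp add: clam_def)

context
  fixes \<alpha> :: "nat \<Rightarrow> nat" and h k :: nat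
  assumes k_eq: "k = 2*h" and h_pos: "1 \<le> h"
begin

lemma clam_lower_step:
  assumes "i \<in> {2..k div 2}"
  shows "clam \<alpha> k i = clam \<alpha> k (i - 1) + real (\<alpha> (k - 2*(i - 2)))"
proof (cases "i = 2")
  case True
  then show ?thesis
    using assms by (simp add: clam_def)
next
  case False
  then obtain j where "i = Suc j" "2 \<le> j"
    using assms by (cases i) auto
  then show ?thesis
    using assms by (simp add: clam_def sum.cl_ivl_Suc)
qed

lemma clam_upper_step:
  assumes "i \<in> {k div 2 + 1..k - 1}"
  shows "clam \<alpha> k i = clam \<alpha> k (i + 1) - real (\<alpha> (2*i - (k - 1)))"
proof -
  define t where "t = i - h"
  have t: "i = h + t" "1 \<le> t"
    using assms k_eq by (auto simp: t_def)
  have "2*i - (k - 1) = 2 * Suc t - 1"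
    using t k_eq h_pos by auto
  then show ?thesis
    using t k_eq h_pos by (simp add: clam_def sum.cl_ivl_Suc)
qed

lemma clam_last: "clam \<alpha> k k = real (nverts \<alpha> k)"
proof -
  have "clam \<alpha> k k = (\<Sum>l=1..h. real (\<alpha> (2*l))) + (\<Sum>l=1..h. real (\<alpha> (2*l - 1)))"
    using k_eq h_pos by (simp add: clam_def)
  also have "\<dots> = real (nverts \<alpha> k)"
    using sum_evens_plus_odds[of "\<lambda>i. real (\<alpha> i)" h] k_eq by (simp add: nverts_def)
  finally show ?thesis .
qed

lemma clam_lower_eq_pivot_eigenvalue:
  "2 + d \<le> h \<Longrightarrow> clam \<alpha> k (2 + d) = pivot_eigenvalue \<alpha> k (k - 2*d - 1)"
proof (induction d)
  case 0
  have "even_tail \<alpha> k (k - 1) = real (\<alpha> k)"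
    using even_tail_Suc[of "k - 1" k \<alpha>] k_eq h_pos by (simp add: even_tail_def)
  then show ?case
    using 0 k_eq by (simp add: clam_def pivot_eigenvalue_def)
next
  case (Suc d)
  define q where "q = k - 2*d - 2"
  have q: "2 \<le> q" "even q" "q < k" "Suc (q - 1) = q"
    "k - 2 * Suc d - 1 = q - 1" "k - 2*d - 1 = Suc q"
    using k_eq Suc.prems by (auto simp: q_def)
  have "clam \<alpha> k (2 + Suc d) = clam \<alpha> k (2 + d) + real (\<alpha> q)"
    using clam_lower_step[of "2 + Suc d"] Suc.prems k_eq by (simp add: q_def)
  also have "\<dots> = even_tail \<alpha> k (Suc q) + real (\<alpha> q)"
    using Suc.IH Suc.prems q k_eq by (simp add: pivot_eigenvalue_def)
  also have "\<dots> = even_tail \<alpha> k (q - 1)"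
    using even_tail_Suc[of "q - 1" k \<alpha>] even_tail_Suc[of q k \<alpha>] q by simp
  also have "\<dots> = pivot_eigenvalue \<alpha> k (k - 2 * Suc d - 1)"
    using q by (simp add: pivot_eigenvalue_def)
  finally show ?case .
qed

lemma clam_upper_eq_pivot_eigenvalue:
  "Suc d \<le> h \<Longrightarrow> clam \<alpha> k (h + Suc d) = pivot_eigenvalue \<alpha> k (2 * Suc d)"
proof (induction d)
  case 0
  have "clam \<alpha> k (h + 1) = even_tail \<alpha> k 0 + real (\<alpha> 1)"
    using sum_evens_eq_even_tail[of \<alpha> h] k_eq h_pos by (simp add: clam_def)
  moreover have "even_tail \<alpha> k 0 = real (\<alpha> 2) + even_tail \<alpha> k 2"
    using even_tail_Suc[of 0 k \<alpha>] even_tail_Suc[of 1 k \<alpha>] k_eq h_pos by (simp add: numeral_2_eq_2)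
  moreover have "real (bstart \<alpha> 3) = real (\<alpha> 1) + real (\<alpha> 2)"
    by (simp add: real_bstart numeral_3_eq_3 numeral_2_eq_2 atLeastLessThanSuc)
  ultimately show ?case
    by (simp add: pivot_eigenvalue_def eval_nat_numeral)
next
  case (Suc d)
  have "h + Suc d \<in> {k div 2 + 1..k - 1}" "2 * (h + Suc d) - (k - 1) = 2*d + 3"
    using k_eq Suc.prems by auto
  then have "clam \<alpha> k (h + Suc (Suc d)) = clam \<alpha> k (h + Suc d) + real (\<alpha> (2*d + 3))"
    using clam_upper_step[of "h + Suc d"] by simp
  moreover have "bstart \<alpha> (2 * Suc (Suc d) + 1) = bstart \<alpha> (2 * Suc d + 1) + \<alpha> (2*d + 3) + \<alpha> (2 * Suc (Suc d))"
    using bstart_Suc[of "2 * Suc d + 1" \<alpha>] bstart_Suc[of "2 * Suc d + 2" \<alpha>] by (simp add: eval_nat_numeral)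
  moreover have "even_tail \<alpha> k (2 * Suc d) = real (\<alpha> (2 * Suc (Suc d))) + even_tail \<alpha> k (2 * Suc (Suc d))"
    using even_tail_Suc[of "2 * Suc d" k \<alpha>] even_tail_Suc[of "Suc (2 * Suc d)" k \<alpha>] k_eq Suc.prems by simp
  ultimately show ?case
    using Suc.IH Suc.prems by (simp add: pivot_eigenvalue_def)
qed

lemma ex_block_eigenvector_clam:
  assumes pos: "\<And>i. i \<in> {1..k} \<Longrightarrow> 0 < \<alpha> i" and i: "i \<in> {1..k}"
  shows "\<exists>z. block_eigenvector \<alpha> k (clam \<alpha> k i) z"
proof -
  consider "i = 1" | d where "i = 2 + d" "2 + d \<le> h" | d where "i = h + Suc d" "Suc d \<le> h"
  proof (cases "i \<le> h")
    case True
    then show ?thesis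
      using that(1) that(2)[of "i - 2"] i by (cases "i = 1") auto
  next
    case False
    then show ?thesis
      using that(3)[of "i - h - 1"] i k_eq by auto
  qed
  then show ?thesis
  proof cases
    case 1
    then show ?thesis
      using block_eigenvector_const[of k \<alpha>] h_pos k_eq clam_one by auto
  next
    case (2 d)
    then have "k - 2*d - 1 \<in> {2..k}"
      using k_eq by auto
    then have "block_eigenvector \<alpha> k (pivot_eigenvalue \<alpha> k (k - 2*d - 1)) (pivot_vector \<alpha> (k - 2*d - 1))"
      using pos by (intro block_eigenvector_pivot) auto
    then show ?thesis
      using 2 clam_lower_eq_pivot_eigenvalue by auto
  next
    case (3 d)
    then have "2 * Suc d \<in> {2..k}"
      using k_eq by auto
    then have "block_eigenvector \<alpha> k (pivot_eigenvalue \<alpha> k (2 * Suc d)) (pivot_vector \<alpha> (2 * Suc d))"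
      using pos by (intro block_eigenvector_pivot) auto
    then show ?thesis
      using 3 clam_upper_eq_pivot_eigenvalue by auto
  qed
qed

lemma clam_less_Suc:
  assumes pos: "\<And>i. i \<in> {1..k} \<Longrightarrow> 0 < \<alpha> i" and "1 \<le> i" "i < k"
  shows "clam \<alpha> k i < clam \<alpha> k (Suc i)"
proof -
  consider "Suc i \<le> h" | "i = h" | "h < i"
    by linarith
  then show ?thesis
  proof cases
    case 1
    then have "clam \<alpha> k (Suc i) = clam \<alpha> k i + real (\<alpha> (k - 2*(i - 1)))"
      using clam_lower_step[of "Suc i"] assms k_eq by simp
    moreover have "k - 2*(i - 1) \<in> {1..k}"
      using 1 assms k_eq by auto
    ultimately show ?thesis
      using pos by fastforce
  next
    case 2
    \<comment> \<open>the two halves of the spectrum are separated by at least \<open>\<alpha>\<^sub>1 + \<alpha>\<^sub>2\<close>\<close>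
    have "clam \<alpha> k (Suc i) = real (bstart \<alpha> 3) + even_tail \<alpha> k 2"
      using 2 clam_upper_eq_pivot_eigenvalue[of 0] h_pos by (simp add: pivot_eigenvalue_def)
    moreover have "clam \<alpha> k i \<le> even_tail \<alpha> k 2"
    proof (cases "h = 1")
      case True
      then show ?thesis
        using 2 clam_one even_tail_nonneg by simp
    next
      case False
      then have "2 + (h - 2) = i" "k - 2*(h - 2) - 1 = 3"
        using 2 k_eq h_pos by auto
      then have "clam \<alpha> k i = pivot_eigenvalue \<alpha> k 3"
        using clam_lower_eq_pivot_eigenvalue[of "h - 2"] 2 by simp
      also have "\<dots> = even_tail \<alpha> k 2"
        using even_tail_Suc[of 2 k \<alpha>] False h_pos k_eq by (simp add: pivot_eigenvalue_def)
      finally show ?thesis by simp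
    qed
    moreover have "0 < \<alpha> 1"
      using pos assms by simp
    then have "0 < real (bstart \<alpha> 3)"
      by (simp add: bstart_def eval_nat_numeral)
    ultimately show ?thesis
      by simp
  next
    case 3
    then have "clam \<alpha> k i = clam \<alpha> k (Suc i) - real (\<alpha> (2*i - (k - 1)))"
      using clam_upper_step[of i] assms k_eq by simp
    moreover have "2*i - (k - 1) \<in> {1..k}"
      using 3 assms k_eq by auto
    ultimately show ?thesis
      using pos by fastforce
  qed
qed

lemma strict_mono_on_clam:
  assumes "\<And>i. i \<in> {1..k} \<Longrightarrow> 0 < \<alpha> i"
  shows "strict_mono_on {1..k} (clam \<alpha> k)"
proof (rule strict_mono_onI)
  fix i j :: nat assume "i \<in> {1..k}" "j \<in> {1..k}" "i < j"
  have "i \<in> {1..k} \<longrightarrow> j \<in> {1..k} \<longrightarrow> clam \<alpha> k i < clam \<alpha> k j"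
    using \<open>i < j\<close>
  proof (induction rule: less_Suc_induct)
    case (1 i)
    then show ?case
      using clam_less_Suc[OF assms] by simp
  next
    case (2 i j l)
    then show ?case
      by fastforce
  qed
  then show "clam \<alpha> k i < clam \<alpha> k j"
    using \<open>i \<in> {1..k}\<close> \<open>j \<in> {1..k}\<close> by blast
qed

end

theorem theorem2p1:
  fixes \<alpha> :: "nat \<Rightarrow> nat" and k :: nat
  assumes "even k" and "k \<ge> 2"
    and "\<And>i. i \<in> {1..k} \<Longrightarrow> \<alpha> i > 0"
  defines "n \<equiv> nverts \<alpha> k"
    and "lam \<equiv> clam \<alpha> k"
  shows "char_poly (cquot \<alpha> k) = (\<Prod>i=1..k. [:- lam i, 1:])
    \<and> (\<forall>i j. 1 \<le> i \<and> i \<le> j \<and> j \<le> k \<longrightarrow> lam i \<le> lam j)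
    \<and> lam 1 = 0 \<and> lam k = real n
    \<and> (\<forall>i\<in>{2..k div 2}. lam i = lam (i-1) + real (\<alpha> (k - 2*(i-2))))
    \<and> (\<forall>i\<in>{k div 2 + 1..k-1}. lam i = lam (i+1) - real (\<alpha> (2*i - (k-1))))
    \<and> (\<forall>i\<in>{1..k}. eigenvalue (claplacian \<alpha> k) (lam i))"
proof -
  obtain h where k_eq: "k = 2*h"
    using \<open>even k\<close> by blast
  have h_pos: "1 \<le> h"
    using k_eq \<open>k \<ge> 2\<close> by simp
  note pos = assms(3)
  have mono: "strict_mono_on {1..k} lam"
    unfolding lam_def using k_eq h_pos pos by (rule strict_mono_on_clam)
  have eig: "eigenvalue (cquot \<alpha> k) (lam i) \<and> eigenvalue (claplacian \<alpha> k) (lam i)"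
    if i: "i \<in> {1..k}" for i
  proof -
    obtain z where "block_eigenvector \<alpha> k (lam i) z"
      using ex_block_eigenvector_clam[of k h \<alpha> i] k_eq h_pos pos i unfolding lam_def by blast
    then show ?thesis
      using pos eigenvalue_cquot_if_block_eigenvector eigenvalue_claplacian_if_block_eigenvector
      by blast
  qed
  have "char_poly (cquot \<alpha> k) = (\<Prod>i=1..k. [:- lam i, 1:])"
    using eig strict_mono_on_imp_inj_on[OF mono]
    by (intro char_poly_eq_prod_distinct_eigenvalues[of _ k]) (auto simp: cquot_def)
  moreover have "\<forall>i j. 1 \<le> i \<and> i \<le> j \<and> j \<le> k \<longrightarrow> lam i \<le> lam j"
    using strict_mono_on_leD[OF mono] by auto
  moreover have "lam 1 = 0" "lam k = real n"
    unfolding lam_def n_def using clam_one clam_last[OF k_eq h_pos] by simp_all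
  moreover have "\<forall>i\<in>{2..k div 2}. lam i = lam (i-1) + real (\<alpha> (k - 2*(i-2)))"
    unfolding lam_def using clam_lower_step[OF k_eq h_pos] by blast
  moreover have "\<forall>i\<in>{k div 2 + 1..k-1}. lam i = lam (i+1) - real (\<alpha> (2*i - (k-1)))"
    unfolding lam_def using clam_upper_step[OF k_eq h_pos] by blast
  ultimately show ?thesis
    using eig by simp
qed

end
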